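(* Let $p\ge1$, $k\ge1$, $r\in\{0,\dots,p\}$, and suppose $(c,\{f_i\}_{i=0}^k)$ belongs to $\mathcal M_r(\alpha,\bar b,\bar\rho)$ with associated set $\mathcal B$. Then the model $(c^*,\{f_i^*\}_{i=0}^k)$ with $c^*=c$ and $f_i^*=f_i\circ f_0^{-1}$ for $i=0,\dots,k$ belongs to $\mathcal M_r^*(\alpha,\bar b,\bar\rho)$, with $g_i^*=g_i\circ f_0^{-1}$ for $i=0,\dots,k-1$, $\pi^*=\pi\circ f_0^{-1}$, and $\chi^*=(\psi^{*\top},\theta^{*\top})^\top=((\psi\circ f_0^{-1})^\top,(\theta\circ f_0^{-1})^\top)^\top=\chi\circ f_0^{-1}$ (starred objects being those associated with the starred model). Moreover, one may take $\mathcal B^*=\mathcal B$, where $\mathcal B$ and $\mathcal B^*$ are the sets in condition (iii) for the two models respectively.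
   Context: Model: for $c\in\mathbb R^p$ and maps $f_0,\dots,f_k:\mathbb R^p\to\mathbb R^p$ with $f_i(0)=0$, the VAR $f_0(z_t)=c+\sum_{i=1}^k f_i(z_{t-i})+u_t$. (When $k=1$, blocks indexed by $1,\dots,k-1$ are empty.) Define $g_j(z)=-\sum_{i=j+1}^k f_i(z)$; $\pi(z)=-f_0(z)+\sum_{i=1}^k f_i(z)$; $\mathbf g=(g_1^\top,\dots,g_{k-1}^\top)^\top$. $D\in\mathbb R^{p(k-1)\times p(k-1)}$ has $-I_p$ diagonal blocks, $I_p$ blocks immediately above the diagonal, zeros elsewhere; $E=(I_p,0_{p\times p(k-2)})^\top$. $\alpha_\perp$ is $p\times(p-r)$ of rank $p-r$ with $\alpha_\perp^\top\alpha=0$; $\boldsymbol\alpha=\begin{bmatrix}\alpha & E^\top\\ 0 & I_{p(k-1)}\end{bmatrix}$; for $\theta:\mathbb R^p\to\mathbb R^r$, $\boldsymbol\theta=(\theta^\top,\mathbf g^\top)^\top$, $\mathbf D_0=\begin{bmatrix}0_{r\times p}&0\\0&D\end{bmatrix}$. $\rho_{JSR}(\mathcal A)=\limsup_{t}\sup\{\rho(M_1\cdots M_t)^{1/t}:M_s\in\mathcal A\}$. Class $\mathcal M_r(\alpha,\bar b,\bar\rho)$ ($\alpha\in\mathbb R^{p\times r}$ of rank $r$, $\bar b\in\mathbb R$, $\bar\rho\in[0,1)$): (i) $f_0$ is a homeomorphism of $\mathbb R^p$; (ii) there exist $\mu\in\mathbb R^r$, $\theta:\mathbb R^p\to\mathbb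 R^r$ with $c=\alpha\mu$, $\pi=\alpha\theta$; (iii) there is a closed $\mathcal B\subset\mathbb R^{kp\times[p(k-1)+r]}$ with $\max_{\mathcal B}\|\boldsymbol\beta\|\le\bar b$ and $\rho_{JSR}(\{I+\boldsymbol\beta^\top\boldsymbol\alpha:\boldsymbol\beta\in\mathcal B\})\le\bar\rho$, such that for all $\mathbf z=(z^\top,\boldsymbol\zeta^\top)^\top,\mathbf z'\in\mathbb R^{kp}$ some $\boldsymbol\beta\in\mathcal B$ satisfies $[\boldsymbol\theta(f_0^{-1}(z))+\mathbf D_0\mathbf z]-[\boldsymbol\theta(f_0^{-1}(z'))+\mathbf D_0\mathbf z']=\boldsymbol\beta^\top(\mathbf z-\mathbf z')$. $\mathcal M_r^*(\alpha,\bar b,\bar\rho)$ is the subclass with $f_0$ the identity. $\psi(z)=\alpha_\perp^\top[f_0(z)-\sum_{i=1}^{k-1}g_i(z)]$, $\chi=(\psi^\top,\theta^\top)^\top$. *)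

theory Defs
  imports "Jordan_Normal_Form.Spectral_Radius" "Jordan_Normal_Form.DL_Rank"
    "HOL-Library.Liminf_Limsup" "HOL-Library.Extended_Real"
begin

definition vnorm :: "real vec \<Rightarrow> real" where
  "vnorm v = sqrt (\<Sum>i<dim_vec v. (v $ i)^2)"

definition vcont_on :: "nat \<Rightarrow> nat \<Rightarrow> (real vec \<Rightarrow> real vec) \<Rightarrow> bool" where
  "vcont_on n m h \<longleftrightarrow> (\<forall>x\<in>carrier_vec n. h x \<in> carrier_vec m \<and>
     (\<forall>e>0. \<exists>d>0. \<forall>y\<in>carrier_vec n. vnorm (y - x) < d \<longrightarrow> vnorm (h y - h x) < e))"

definition vhomeo :: "nat \<Rightarrow> (real vec \<Rightarrow> real vec) \<Rightarrow> bool" where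
  "vhomeo n h \<longleftrightarrow> bij_betw h (carrier_vec n) (carrier_vec n) \<and> vcont_on n n h
     \<and> vcont_on n n (inv_into (carrier_vec n) h)"

definition mnorm :: "real mat \<Rightarrow> real" where
  "mnorm A = Sup {vnorm (A *\<^sub>v x) | x. x \<in> carrier_vec (dim_col A) \<and> vnorm x \<le> 1}"

definition mat_closed :: "nat \<Rightarrow> nat \<Rightarrow> real mat set \<Rightarrow> bool" where
  "mat_closed n m B \<longleftrightarrow> B \<subseteq> carrier_mat n m \<and>
     (\<forall>s L. (\<forall>t. s t \<in> B) \<longrightarrow> L \<in> carrier_mat n m \<longrightarrow>
        (\<forall>i<n. \<forall>j<m. (\<lambda>t. s t $$ (i,j)) \<longlonglongrightarrow> L $$ (i,j)) \<longrightarrow> L \<in> B)"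

definition rspec_rad :: "real mat \<Rightarrow> real" where
  "rspec_rad M = spectral_radius (map_mat complex_of_real M)"

definition jsr :: "nat \<Rightarrow> real mat set \<Rightarrow> ereal" where
  "jsr n A = limsup (\<lambda>t. SUP ms\<in>{ms. length ms = t \<and> set ms \<subseteq> A}.
       ereal (root t (rspec_rad (foldr (*) ms (1\<^sub>m n)))))"

definition gfun :: "nat \<Rightarrow> nat \<Rightarrow> (nat \<Rightarrow> real vec \<Rightarrow> real vec) \<Rightarrow> nat \<Rightarrow> real vec \<Rightarrow> real vec" where
  "gfun p k f j z = vec p (\<lambda>l. - (\<Sum>i\<in>{j+1..k}. f i z $ l))"

definition pifun :: "nat \<Rightarrow> nat \<Rightarrow> (nat \<Rightarrow> real vec \<Rightarrow> real vec) \<Rightarrow> real vec \<Rightarrow> real vec" where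
  "pifun p k f z = vec p (\<lambda>l. - (f 0 z $ l) + (\<Sum>i\<in>{1..k}. f i z $ l))"

text \<open>stacked (g_1,...,g_{k-1}) in R^(p(k-1))\<close>
definition gbold :: "nat \<Rightarrow> nat \<Rightarrow> (nat \<Rightarrow> real vec \<Rightarrow> real vec) \<Rightarrow> real vec \<Rightarrow> real vec" where
  "gbold p k f z = vec (p*(k-1)) (\<lambda>l. gfun p k f (l div p + 1) z $ (l mod p))"

definition Dmat :: "nat \<Rightarrow> nat \<Rightarrow> real mat" where
  "Dmat p k = mat (p*(k-1)) (p*(k-1)) (\<lambda>(a,b).
     if a mod p = b mod p \<and> a div p = b div p then -1
     else if a mod p = b mod p \<and> b div p = a div p + 1 then 1 else 0)"

definition Emat :: "nat \<Rightarrow> nat \<Rightarrow> real mat" where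
  "Emat p k = mat (p*(k-1)) p (\<lambda>(a,b). if a = b then 1 else 0)"

definition alpha_bold :: "nat \<Rightarrow> nat \<Rightarrow> nat \<Rightarrow> real mat \<Rightarrow> real mat" where
  "alpha_bold p k r \<alpha> = four_block_mat \<alpha> (transpose_mat (Emat p k))
      (0\<^sub>m (p*(k-1)) r) (1\<^sub>m (p*(k-1)))"

definition D0mat :: "nat \<Rightarrow> nat \<Rightarrow> nat \<Rightarrow> real mat" where
  "D0mat p k r = four_block_mat (0\<^sub>m r p) (0\<^sub>m r (p*(k-1))) (0\<^sub>m (p*(k-1)) p) (Dmat p k)"

definition theta_bold :: "nat \<Rightarrow> nat \<Rightarrow> (nat \<Rightarrow> real vec \<Rightarrow> real vec) \<Rightarrow> (real vec \<Rightarrow> real vec)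
    \<Rightarrow> real vec \<Rightarrow> real vec" where
  "theta_bold p k f \<theta> z = \<theta> z @\<^sub>v gbold p k f z"

definition psifun :: "nat \<Rightarrow> nat \<Rightarrow> (nat \<Rightarrow> real vec \<Rightarrow> real vec) \<Rightarrow> real mat \<Rightarrow> real vec \<Rightarrow> real vec" where
  "psifun p k f \<alpha>perp z = transpose_mat \<alpha>perp *\<^sub>v
     vec p (\<lambda>l. f 0 z $ l - (\<Sum>i\<in>{1..k-1}. gfun p k f i z $ l))"

definition chifun :: "nat \<Rightarrow> nat \<Rightarrow> (nat \<Rightarrow> real vec \<Rightarrow> real vec) \<Rightarrow> real mat \<Rightarrow> (real vec \<Rightarrow> real vec)
    \<Rightarrow> real vec \<Rightarrow> real vec" where
  "chifun p k f \<alpha>perp \<theta> z = psifun p k f \<alpha>perp z @\<^sub>v \<theta> z"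

text \<open>Membership of (c, f) in M_r(alpha, bbar, rhobar), with explicit witnesses mu, theta, B
  for conditions (ii) and (iii).\<close>
definition in_M_with :: "nat \<Rightarrow> nat \<Rightarrow> nat \<Rightarrow> real mat \<Rightarrow> real \<Rightarrow> real \<Rightarrow> real vec
    \<Rightarrow> (nat \<Rightarrow> real vec \<Rightarrow> real vec) \<Rightarrow> real vec \<Rightarrow> (real vec \<Rightarrow> real vec) \<Rightarrow> real mat set \<Rightarrow> bool" where
  "in_M_with p k r \<alpha> bb rho c f \<mu> \<theta> B \<longleftrightarrow>
     \<comment> \<open>standing assumptions on the model\<close>
     c \<in> carrier_vec p \<and>
     (\<forall>i\<le>k. (\<forall>z\<in>carrier_vec p. f i z \<in> carrier_vec p) \<and> f i (0\<^sub>v p) = 0\<^sub>v p) \<and>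
     \<comment> \<open>(i)\<close>
     vhomeo p (f 0) \<and>
     \<comment> \<open>(ii)\<close>
     \<mu> \<in> carrier_vec r \<and> (\<forall>z\<in>carrier_vec p. \<theta> z \<in> carrier_vec r) \<and>
     c = \<alpha> *\<^sub>v \<mu> \<and> (\<forall>z\<in>carrier_vec p. pifun p k f z = \<alpha> *\<^sub>v \<theta> z) \<and>
     \<comment> \<open>(iii)\<close>
     mat_closed (k*p) (p*(k-1)+r) B \<and>
     (\<forall>\<beta>\<in>B. mnorm \<beta> \<le> bb) \<and>
     jsr (r + p*(k-1)) ((\<lambda>\<beta>. 1\<^sub>m (r + p*(k-1)) + transpose_mat \<beta> * alpha_bold p k r \<alpha>) ` B) \<le> ereal rho \<and>
     (\<forall>zz\<in>carrier_vec (k*p). \<forall>zz'\<in>carrier_vec (k*p). \<exists>\<beta>\<in>B.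
        (theta_bold p k f \<theta> (inv_into (carrier_vec p) (f 0) (vec_first zz p)) + D0mat p k r *\<^sub>v zz)
      - (theta_bold p k f \<theta> (inv_into (carrier_vec p) (f 0) (vec_first zz' p)) + D0mat p k r *\<^sub>v zz')
      = transpose_mat \<beta> *\<^sub>v (zz - zz'))"

definition in_M :: "nat \<Rightarrow> nat \<Rightarrow> nat \<Rightarrow> real mat \<Rightarrow> real \<Rightarrow> real \<Rightarrow> real vec
    \<Rightarrow> (nat \<Rightarrow> real vec \<Rightarrow> real vec) \<Rightarrow> bool" where
  "in_M p k r \<alpha> bb rho c f \<longleftrightarrow> (\<exists>\<mu> \<theta> B. in_M_with p k r \<alpha> bb rho c f \<mu> \<theta> B)"

definition in_Mstar_with :: "nat \<Rightarrow> nat \<Rightarrow> nat \<Rightarrow> real mat \<Rightarrow> real \<Rightarrow> real \<Rightarrow> real vec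
    \<Rightarrow> (nat \<Rightarrow> real vec \<Rightarrow> real vec) \<Rightarrow> real vec \<Rightarrow> (real vec \<Rightarrow> real vec) \<Rightarrow> real mat set \<Rightarrow> bool" where
  "in_Mstar_with p k r \<alpha> bb rho c f \<mu> \<theta> B \<longleftrightarrow>
     in_M_with p k r \<alpha> bb rho c f \<mu> \<theta> B \<and> (\<forall>z\<in>carrier_vec p. f 0 z = z)"

definition in_Mstar :: "nat \<Rightarrow> nat \<Rightarrow> nat \<Rightarrow> real mat \<Rightarrow> real \<Rightarrow> real \<Rightarrow> real vec
    \<Rightarrow> (nat \<Rightarrow> real vec \<Rightarrow> real vec) \<Rightarrow> bool" where
  "in_Mstar p k r \<alpha> bb rho c f \<longleftrightarrow> (\<exists>\<mu> \<theta> B. in_Mstar_with p k r \<alpha> bb rho c f \<mu> \<theta> B)"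

end

theory Submission
  imports Defs
begin

text \<open>Precomposing every f i with the inverse of the homeomorphism f 0 turns f 0 into the
  identity, and all derived objects (g, \<pi>, \<psi>, \<chi>, the stacked \<theta>) transform by the same
  precomposition, since each is built pointwise from the values f i z. Condition (iii) only
  involves f through \<theta> and g evaluated at the preimage of a point under f 0, and these
  composites are unchanged by the substitution, so the same set B serves for the new model.\<close>

lemma vcont_on_id_on:
  assumes "\<And>z. z \<in> carrier_vec n \<Longrightarrow> h z = z"
  shows "vcont_on n n h"
  unfolding vcont_on_def using assms by simp blast

lemma inv_into_id_on:
  assumes "\<And>z. z \<in> A \<Longrightarrow> h z = z" and "w \<in> A"
  shows "inv_into A h w = w"
proof (rule inv_into_f_eq)
  show "inj_on h A" using assms(1) by (metis inj_on_def)
qed (use assms in auto)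

lemma vhomeo_id_on:
  assumes id: "\<And>z. z \<in> carrier_vec n \<Longrightarrow> h z = z"
  shows "vhomeo n h"
proof -
  have "bij_betw h (carrier_vec n) (carrier_vec n)"
    using bij_betw_cong[of "carrier_vec n" h id] id by simp
  moreover have "vcont_on n n (inv_into (carrier_vec n) h)"
    by (rule vcont_on_id_on) (rule inv_into_id_on[OF id])
  ultimately show ?thesis
    unfolding vhomeo_def using vcont_on_id_on[OF id] by blast
qed

lemma gfun_comp: "gfun p k (\<lambda>i. f i \<circ> \<phi>) j z = gfun p k f j (\<phi> z)"
  unfolding gfun_def by simp

lemma pifun_comp: "pifun p k (\<lambda>i. f i \<circ> \<phi>) z = pifun p k f (\<phi> z)"
  unfolding pifun_def by simp

lemma gbold_comp: "gbold p k (\<lambda>i. f i \<circ> \<phi>) z = gbold p k f (\<phi> z)"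
  unfolding gbold_def gfun_comp ..

lemma theta_bold_comp: "theta_bold p k (\<lambda>i. f i \<circ> \<phi>) (\<theta> \<circ> \<phi>) z = theta_bold p k f \<theta> (\<phi> z)"
  unfolding theta_bold_def gbold_comp by simp

lemma psifun_comp: "psifun p k (\<lambda>i. f i \<circ> \<phi>) \<alpha>perp z = psifun p k f \<alpha>perp (\<phi> z)"
  unfolding psifun_def gfun_comp by simp

lemma chifun_comp:
  "chifun p k (\<lambda>i. f i \<circ> \<phi>) \<alpha>perp (\<theta> \<circ> \<phi>) z = chifun p k f \<alpha>perp \<theta> (\<phi> z)"
  unfolding chifun_def psifun_comp by simp

lemma in_Mstar_with_comp_inv:
  assumes M: "in_M_with p k r \<alpha> bb rho c f \<mu> \<theta> B"
  defines "finv \<equiv> inv_into (carrier_vec p) (f 0)"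
  shows "in_Mstar_with p k r \<alpha> bb rho c (\<lambda>i. f i \<circ> finv) \<mu> (\<theta> \<circ> finv) B"
proof -
  let ?fstar = "\<lambda>i. f i \<circ> finv"
  have bij: "bij_betw (f 0) (carrier_vec p) (carrier_vec p)"
    using M unfolding in_M_with_def vhomeo_def by blast
  have finv_in: "finv z \<in> carrier_vec p" if "z \<in> carrier_vec p" for z
    using bij_betw_apply[OF bij_betw_inv_into[OF bij] that] unfolding finv_def .
  have fstar0_id: "?fstar 0 z = z" if "z \<in> carrier_vec p" for z
    using bij_betw_inv_into_right[OF bij that] unfolding finv_def by simp
  have finv0: "finv (0\<^sub>v p) = 0\<^sub>v p"
    using M bij_betw_inv_into_left[OF bij, of "0\<^sub>v p"] unfolding in_M_with_def finv_def by simp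
  have theta_bold_star: "theta_bold p k ?fstar (\<theta> \<circ> finv)
      (inv_into (carrier_vec p) (?fstar 0) (vec_first zz p))
    = theta_bold p k f \<theta> (finv (vec_first zz p))"
    for zz :: "real vec"
    by (simp add: inv_into_id_on[OF fstar0_id] theta_bold_comp)
  have "in_M_with p k r \<alpha> bb rho c ?fstar \<mu> (\<theta> \<circ> finv) B"
    unfolding in_M_with_def theta_bold_star pifun_comp
  proof (intro conjI)
    show "vhomeo p (?fstar 0)"
      by (rule vhomeo_id_on) (rule fstar0_id)
    show "\<forall>i\<le>k. (\<forall>z\<in>carrier_vec p. ?fstar i z \<in> carrier_vec p) \<and> ?fstar i (0\<^sub>v p) = 0\<^sub>v p"
      using M finv_in finv0 unfolding in_M_with_def by simp
  qed (use M finv_in in \<open>auto simp: in_M_with_def finv_def\<close>)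
  then show ?thesis
    unfolding in_Mstar_with_def using fstar0_id by blast
qed

theorem lemmaB2:
  fixes p k r :: nat and \<alpha> :: "real mat" and bb rho :: real and c :: "real vec"
    and f :: "nat \<Rightarrow> real vec \<Rightarrow> real vec" and \<mu> :: "real vec"
    and \<theta> :: "real vec \<Rightarrow> real vec" and B :: "real mat set"
  defines "finv \<equiv> inv_into (carrier_vec p) (f 0)"
  defines "fstar \<equiv> (\<lambda>i. f i \<circ> finv)"
  assumes "p \<ge> 1" and "k \<ge> 1" and "r \<le> p"
    and "\<alpha> \<in> carrier_mat p r" and "vec_space.rank p \<alpha> = r"
    and "0 \<le> rho" and "rho < 1"
    and "in_M_with p k r \<alpha> bb rho c f \<mu> \<theta> B"
  shows "in_Mstar_with p k r \<alpha> bb rho c fstar \<mu> (\<theta> \<circ> finv) B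
    \<and> (\<forall>i<k. \<forall>z\<in>carrier_vec p. gfun p k fstar i z = gfun p k f i (finv z))
    \<and> (\<forall>z\<in>carrier_vec p. pifun p k fstar z = pifun p k f (finv z))
    \<and> (\<forall>\<alpha>perp. \<alpha>perp \<in> carrier_mat p (p - r) \<and> vec_space.rank p \<alpha>perp = p - r
          \<and> transpose_mat \<alpha>perp * \<alpha> = 0\<^sub>m (p - r) r \<longrightarrow>
         (\<forall>z\<in>carrier_vec p.
            psifun p k fstar \<alpha>perp z = psifun p k f \<alpha>perp (finv z)
          \<and> chifun p k fstar \<alpha>perp (\<theta> \<circ> finv) z = chifun p k f \<alpha>perp \<theta> (finv z)))"
  using in_Mstar_with_comp_inv[OF assms(10)]
  unfolding fstar_def finv_def gfun_comp pifun_comp psifun_comp chifun_comp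
  by simp

end
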